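(* Let $f:\mathbb{R}^\ell\times\mathbb{R}^m\to\mathbb{R}^\ell$ be $C^1$, let $\Lambda$ be a parameter shift with limits $\lambda_\pm$, and suppose $X$ defines a forward inflowing stable path with endpoints $X_\pm$. Then for every $r>0$, the unique solution $\{x_n^r\}_{n\in\mathbb{Z}}$ of $x_{n+1}=f(x_n,\Lambda(rn))$ with $\lim_{n\to-\infty}x_n^r=X_-$ satisfies $\lim_{n\to\infty}x_n^r=X_+$ (i.e. there is no R-tipping away from $X_-$).
   Context: A parameter shift is a $C^1$ function $\Lambda:\mathbb{R}\to\mathbb{R}^m$ with $\lim_{s\to\pm\infty}\Lambda(s)=\lambda_\pm$ and $\lim_{s\to\pm\infty}\Lambda'(s)=0$. A stable path is given by $X:\mathbb{R}\to\mathbb{R}^\ell$ such that: $X(s)$ is a fixed point of $f(\cdot,\Lambda(s))$ for every $s$; $\{(s,X(s))\}$ is a connected curve; the limits $X_\pm=\lim_{s\to\pm\infty}X(s)$ exist and are fixed points of $f(\cdot,\lambda_\pm)$; and the spectral radius of $D_xf(X(s),\Lambda(s))$ is $<1$ for all $s\in\mathbb{R}\cup\{\pm\infty\}$ (with $X(\pm\infty)=X_\pm$, $\Lambda(\pm\infty)=\lambda_\pm$). It is known that for each $r>0$ there is a unique solution with $x_n^r\to X_-$ as $n\to-\infty$. $\mathbb{B}(p,\lambda)$ denotes the basin of attraction of a fixed point $p$ of $f(\cdot,\lambda)$. The stable path is forward inflowing stable if there exist compact sets $K(s)\subset\mathbb{R}^\ell$, $s\in\mathbb{R}$, such that: (1)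 $K(s_1)\subset K(s_2)$ whenever $s_1<s_2$; (2) $f(K(s),\Lambda(s))\subset K(s)$ for all $s$; (3) $X_\pm\in\operatorname{Int}K_\pm$, where $K_-=\bigcap_{s}K(s)$ and $K_+=\overline{\bigcup_sK(s)}$; (4) $K_+$ is compact and $K_+\subset\mathbb{B}(X_+,\lambda_+)$. *)

theory Defs
  imports "HOL-Analysis.Analysis"
begin

definition C1_map :: "('a::real_normed_vector \<Rightarrow> 'b::real_normed_vector) \<Rightarrow> bool" where
  "C1_map g \<longleftrightarrow> (\<exists>g'. (\<forall>p. (g has_derivative blinfun_apply (g' p)) (at p)) \<and> continuous_on UNIV g')"

definition mat_spectral_radius :: "real^'n^'n \<Rightarrow> real" where
  "mat_spectral_radius A =
     Max (norm ` {z::complex. det ((\<chi> i j. (if i = j then z else 0) - complex_of_real (A $ i $ j))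
                                  :: complex^'n^'n) = 0})"

definition Dx :: "(real^'l \<Rightarrow> real^'m \<Rightarrow> real^'l) \<Rightarrow> real^'l \<Rightarrow> real^'m \<Rightarrow> real^'l^'l" where
  "Dx f x lam = matrix (frechet_derivative (\<lambda>y. f y lam) (at x))"

definition is_fixed_point :: "(real^'l \<Rightarrow> real^'m \<Rightarrow> real^'l) \<Rightarrow> real^'l \<Rightarrow> real^'m \<Rightarrow> bool" where
  "is_fixed_point f p lam \<longleftrightarrow> f p lam = p"

definition basin :: "(real^'l \<Rightarrow> real^'m \<Rightarrow> real^'l) \<Rightarrow> real^'l \<Rightarrow> real^'m \<Rightarrow> (real^'l) set" where
  "basin f p lam = {x. (\<lambda>n. ((\<lambda>y. f y lam) ^^ n) x) \<longlonglongrightarrow> p}"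

definition parameter_shift :: "(real \<Rightarrow> real^'m) \<Rightarrow> real^'m \<Rightarrow> real^'m \<Rightarrow> bool" where
  "parameter_shift \<Lambda> lm lp \<longleftrightarrow>
     (\<exists>\<Lambda>'. (\<forall>s. (\<Lambda> has_vector_derivative \<Lambda>' s) (at s)) \<and> continuous_on UNIV \<Lambda>' \<and>
            (\<Lambda>' \<longlongrightarrow> 0) at_bot \<and> (\<Lambda>' \<longlongrightarrow> 0) at_top) \<and>
     (\<Lambda> \<longlongrightarrow> lm) at_bot \<and> (\<Lambda> \<longlongrightarrow> lp) at_top"

definition stable_path ::
  "(real^'l \<Rightarrow> real^'m \<Rightarrow> real^'l) \<Rightarrow> (real \<Rightarrow> real^'m) \<Rightarrow> real^'m \<Rightarrow> real^'m
     \<Rightarrow> (real \<Rightarrow> real^'l) \<Rightarrow> real^'l \<Rightarrow> real^'l \<Rightarrow> bool" where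
  "stable_path f \<Lambda> lm lp X Xm Xp \<longleftrightarrow>
     (\<forall>s. is_fixed_point f (X s) (\<Lambda> s)) \<and>
     connected ((\<lambda>s. (s, X s)) ` UNIV) \<and>
     (X \<longlongrightarrow> Xm) at_bot \<and> (X \<longlongrightarrow> Xp) at_top \<and>
     is_fixed_point f Xm lm \<and> is_fixed_point f Xp lp \<and>
     (\<forall>s. mat_spectral_radius (Dx f (X s) (\<Lambda> s)) < 1) \<and>
     mat_spectral_radius (Dx f Xm lm) < 1 \<and>
     mat_spectral_radius (Dx f Xp lp) < 1"

definition forward_inflowing_stable ::
  "(real^'l \<Rightarrow> real^'m \<Rightarrow> real^'l) \<Rightarrow> (real \<Rightarrow> real^'m) \<Rightarrow> real^'m \<Rightarrow> real^'m
     \<Rightarrow> (real \<Rightarrow> real^'l) \<Rightarrow> real^'l \<Rightarrow> real^'l \<Rightarrow> bool" where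
  "forward_inflowing_stable f \<Lambda> lm lp X Xm Xp \<longleftrightarrow>
     stable_path f \<Lambda> lm lp X Xm Xp \<and>
     (\<exists>K :: real \<Rightarrow> (real^'l) set.
        (\<forall>s. compact (K s)) \<and>
        (\<forall>s1 s2. s1 < s2 \<longrightarrow> K s1 \<subseteq> K s2) \<and>
        (\<forall>s. (\<lambda>x. f x (\<Lambda> s)) ` K s \<subseteq> K s) \<and>
        Xm \<in> interior (\<Inter>s. K s) \<and>
        Xp \<in> interior (closure (\<Union>s. K s)) \<and>
        compact (closure (\<Union>s. K s)) \<and>
        closure (\<Union>s. K s) \<subseteq> basin f Xp lp)"

end

theory Submission
  imports Defs "Jordan_Normal_Form.Spectral_Radius"
begin

text \<open>
  Far in the past the orbit lies in the interior of K_-. Since the sets K(s) increase with s and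
  are forward invariant, from then on the orbit stays in the compact set K_+, which is contained
  in the basin of X_+, while the parameters Lambda(r n) converge to lambda_+. By compactness and
  continuity the orbit follows orbits of the limit map f(., lambda_+) on longer and longer
  stretches, so it comes arbitrarily close to X_+ infinitely often. Near X_+ the map contracts a
  norm adapted to A = D_x f(X_+, lambda_+), up to the error |f(X_+, Lambda(r n)) - X_+|, which
  tends to 0; hence once the orbit is close enough to X_+ it is trapped and converges. The adapted
  norm exists because spectral radius below 1 gives |A^k| <= C t^k with t < 1, which follows
  from the Jordan normal form.
\<close>

no_notation Matrix.vec_index (infixl "$" 100)

section \<open>Decay of powers of a matrix with spectral radius below 1\<close>

lemma det_eq_0_iff_nontrivial_kernel:
  fixes M :: "'a::field^'n^'n"
  shows "Determinants.det M = 0 \<longleftrightarrow> (\<exists>w. w \<noteq> 0 \<and> M *v w = 0)"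
proof -
  have "Determinants.det M \<noteq> 0 \<longleftrightarrow> inj ((*v) M)"
    using det_nz_iff_inj_gen[OF matrix_vector_mul_linear_gen[of M]]
    by (simp add: matrix_of_matrix_vector_mul)
  also have "\<dots> \<longleftrightarrow> (\<forall>x. M *v x = 0 \<longrightarrow> x = 0)"
    by (rule vec.linear_inj_iff_eq_0[OF matrix_vector_mul_linear_gen])
  finally show ?thesis by blast
qed

definition complex_mat :: "real^'n^'m \<Rightarrow> complex^'n^'m" where
  "complex_mat A = (\<chi> i j. complex_of_real (A $ i $ j))"

definition complex_vec :: "real^'n \<Rightarrow> complex^'n" where
  "complex_vec v = (\<chi> i. complex_of_real (v $ i))"

lemma norm_complex_vec [simp]: "norm (complex_vec v) = norm v"
  by (simp add: norm_vec_def complex_vec_def)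

lemma funpow_complex_mat_mult_vec:
  fixes A :: "real^'n^'n"
  shows "((*v) (complex_mat A) ^^ k) (complex_vec v) = complex_vec (((*v) A ^^ k) v)"
proof (induction k)
  case (Suc k)
  have "complex_mat A *v complex_vec w = complex_vec (A *v w)" for w
    by (simp add: Finite_Cartesian_Product.vec_eq_iff complex_mat_def complex_vec_def matrix_vector_mult_def)
  then show ?case by (simp add: Suc.IH)
qed simp

lemma complex_mat_scaleR_mult_vec:
  "complex_mat (c *\<^sub>R A) *v w = complex_of_real c *s (complex_mat A *v w)"
  unfolding Finite_Cartesian_Product.vec_eq_iff
  by (simp add: complex_mat_def matrix_vector_mult_def sum_distrib_left mult.assoc)

lemma funpow_scaleR_mult_vec:
  fixes A :: "real^'n^'n"
  shows "((*v) (c *\<^sub>R A) ^^ k) v = c ^ k *\<^sub>R ((*v) A ^^ k) v"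
  by (induction k) (simp_all add: scaleR_matrix_vector_assoc[symmetric] matrix_vector_mult_scaleR)

lemma mat_spectral_radius_eigenvalues:
  fixes A :: "real^'n^'n"
  shows "mat_spectral_radius A = Max (norm ` {z. \<exists>w. w \<noteq> 0 \<and> complex_mat A *v w = z *s w})"
proof -
  have "((\<chi> i j. (if i = j then z else 0) - complex_of_real (A $ i $ j)) :: complex^'n^'n) *v w = 0
      \<longleftrightarrow> complex_mat A *v w = z *s w" for z w
  proof -
    have "((\<chi> i j. (if i = j then z else 0) - complex_of_real (A $ i $ j)) :: complex^'n^'n) *v w
        = z *s w - complex_mat A *v w"
      unfolding Finite_Cartesian_Product.vec_eq_iff
      by (simp add: complex_mat_def matrix_vector_mult_def sum_subtractf left_diff_distrib
          if_distrib[of "\<lambda>x. x * _"] cong: if_cong)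
    then show ?thesis by (metis right_minus_eq)
  qed
  then show ?thesis unfolding mat_spectral_radius_def det_eq_0_iff_nontrivial_kernel by simp
qed

text \<open>Jordan_Normal_Form indexes matrices by \<open>{0..<n}\<close>; an enumeration \<open>h\<close> of the index type
  transports vectors and matrices of Finite_Cartesian_Product there.\<close>

definition jnf_mat :: "(nat \<Rightarrow> 'n) \<Rightarrow> 'a^'n^'n \<Rightarrow> 'a mat" where
  "jnf_mat h M = Matrix.mat CARD('n) CARD('n) (\<lambda>(i,j). M $ h i $ h j)"

definition jnf_vec :: "(nat \<Rightarrow> 'n::finite) \<Rightarrow> 'a^'n \<Rightarrow> 'a Matrix.vec" where
  "jnf_vec h w = Matrix.vec CARD('n) (\<lambda>i. w $ h i)"

lemma jnf_vec_index:
  fixes h :: "nat \<Rightarrow> 'n::finite"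
  shows "i < CARD('n) \<Longrightarrow> Matrix.vec_index (jnf_vec h w) i = w $ h i"
  by (simp add: jnf_vec_def)

lemma jnf_mat_carrier [simp]: "jnf_mat h (M::'a^'n::finite^'n) \<in> carrier_mat CARD('n) CARD('n)"
  by (simp add: jnf_mat_def)

context
  fixes h :: "nat \<Rightarrow> 'n::finite"
  assumes h: "bij_betw h {0..<CARD('n)} UNIV"
begin

lemma jnf_mat_mult_vec: "jnf_mat h (M::'a::comm_semiring_1^'n^'n) *\<^sub>v jnf_vec h w = jnf_vec h (M *v w)"
proof (rule eq_vecI)
  fix i assume "i < dim_vec (jnf_vec h (M *v w))"
  then have i: "i < CARD('n)" by (simp add: jnf_vec_def)
  have "Matrix.vec_index (jnf_mat h M *\<^sub>v jnf_vec h w) i = (\<Sum>j = 0..<CARD('n). M $ h i $ h j * w $ h j)"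
    using i by (simp add: jnf_mat_def jnf_vec_def mult_mat_vec_def scalar_prod_def Matrix.row_def)
  also have "\<dots> = (\<Sum>l\<in>UNIV. M $ h i $ l * w $ l)"
    using sum.reindex_bij_betw[OF h, of "\<lambda>l. M $ h i $ l * w $ l"] by simp
  also have "\<dots> = Matrix.vec_index (jnf_vec h (M *v w)) i"
    using i by (simp add: jnf_vec_def matrix_vector_mult_def)
  finally show "Matrix.vec_index (jnf_mat h M *\<^sub>v jnf_vec h w) i = Matrix.vec_index (jnf_vec h (M *v w)) i" .
qed (simp add: jnf_mat_def jnf_vec_def)

lemma bij_betw_jnf_vec: "bij_betw (jnf_vec h) UNIV (carrier_vec CARD('n))"
proof (rule bij_betwI')
  fix a b :: "'a^'n"
  show "jnf_vec h a = jnf_vec h b \<longleftrightarrow> a = b"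
  proof
    assume eq: "jnf_vec h a = jnf_vec h b"
    show "a = b"
    unfolding Finite_Cartesian_Product.vec_eq_iff
    proof
      fix l :: 'n
      obtain j where "j < CARD('n)" "l = h j" using h unfolding bij_betw_def by force
      then show "a $ l = b $ l" using eq jnf_vec_index by metis
    qed
  qed simp
next
  fix v :: "'a Matrix.vec" assume v: "v \<in> carrier_vec CARD('n)"
  define w where "w = (\<chi> l. Matrix.vec_index v (inv_into {0..<CARD('n)} h l))"
  have "v = jnf_vec h w"
    using v h by (intro eq_vecI) (auto simp: jnf_vec_def w_def bij_betw_def inv_into_f_f)
  then show "\<exists>w\<in>UNIV. v = jnf_vec h w" by blast
qed (simp add: jnf_vec_def)

lemma eigenvalue_jnf_mat:
  "eigenvalue (jnf_mat h (M::'a::field^'n^'n)) z \<longleftrightarrow> (\<exists>w. w \<noteq> 0 \<and> M *v w = z *s w)"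
proof -
  have zero: "jnf_vec h (0::'a^'n) = 0\<^sub>v CARD('n)"
    by (rule eq_vecI) (auto simp: jnf_vec_def)
  have smult: "jnf_vec h (z *s w) = z \<cdot>\<^sub>v jnf_vec h w" for w :: "'a^'n"
    by (rule eq_vecI) (auto simp: jnf_vec_def)
  have inj: "jnf_vec h a = jnf_vec h b \<longleftrightarrow> a = b" for a b :: "'a^'n"
    using bij_betw_jnf_vec by (auto simp: bij_betw_def inj_on_def)
  have carrier: "range (jnf_vec h) = carrier_vec CARD('n)"
    using bij_betw_imp_surj_on[OF bij_betw_jnf_vec] by simp
  have "eigenvalue (jnf_mat h M) z \<longleftrightarrow>
      (\<exists>v\<in>carrier_vec CARD('n). v \<noteq> 0\<^sub>v CARD('n) \<and> jnf_mat h M *\<^sub>v v = z \<cdot>\<^sub>v v)"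
    unfolding eigenvalue_def eigenvector_def by (auto simp: carrier_matD(1)[OF jnf_mat_carrier])
  also have "\<dots> \<longleftrightarrow> (\<exists>w. jnf_vec h w \<noteq> 0\<^sub>v CARD('n) \<and> jnf_mat h M *\<^sub>v jnf_vec h w = z \<cdot>\<^sub>v jnf_vec h w)"
    unfolding carrier[symmetric] by simp
  also have "\<dots> \<longleftrightarrow> (\<exists>w. w \<noteq> 0 \<and> M *v w = z *s w)"
    by (simp flip: zero smult add: jnf_mat_mult_vec inj)
  finally show ?thesis .
qed

lemma jnf_mat_pow_mult_vec:
  "(jnf_mat h (M::'a::comm_semiring_1^'n^'n) ^\<^sub>m k) *\<^sub>v jnf_vec h w = jnf_vec h (((*v) M ^^ k) w)"
proof (induction k arbitrary: w)
  case 0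
  show ?case by (simp add: jnf_mat_def jnf_vec_def)
next
  case (Suc k)
  have "(jnf_mat h M ^\<^sub>m Suc k) *\<^sub>v jnf_vec h w = (jnf_mat h M ^\<^sub>m k) *\<^sub>v (jnf_mat h M *\<^sub>v jnf_vec h w)"
    by (simp add: assoc_mult_mat_vec[OF pow_carrier_mat[OF jnf_mat_carrier] jnf_mat_carrier]
        jnf_vec_def)
  also have "\<dots> = jnf_vec h (((*v) M ^^ Suc k) w)"
    by (simp add: jnf_mat_mult_vec Suc.IH funpow_Suc_right del: funpow.simps)
  finally show ?case .
qed

lemma norm_le_if_norm_bound:
  fixes u w :: "'a::real_normed_field^'n" and c :: real
  assumes P: "P \<in> carrier_mat CARD('n) CARD('n)" and "norm_bound P c"
    and Pw: "P *\<^sub>v jnf_vec h w = jnf_vec h u"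
  shows "norm u \<le> CARD('n) * (CARD('n) * max c 0) * norm w"
proof -
  have entry: "norm (u $ l) \<le> CARD('n) * max c 0 * norm w" for l
  proof -
    obtain i where i: "i < CARD('n)" "l = h i" using h unfolding bij_betw_def by force
    have "u $ l = Matrix.vec_index (P *\<^sub>v jnf_vec h w) i"
      using i by (simp add: Pw jnf_vec_index)
    also have "\<dots> = (\<Sum>j = 0..<CARD('n). P $$ (i, j) * w $ h j)"
      using i P by (simp add: mult_mat_vec_def scalar_prod_def Matrix.row_def jnf_vec_def)
    finally have "norm (u $ l) \<le> (\<Sum>j = 0..<CARD('n). norm (P $$ (i, j) * w $ h j))"
      by (metis norm_sum)
    also have "\<dots> \<le> (\<Sum>j = 0..<CARD('n). max c 0 * norm w)"
    proof (rule sum_mono)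
      fix j assume "j \<in> {0..<CARD('n)}"
      then have "norm (P $$ (i, j)) \<le> max c 0"
        using \<open>norm_bound P c\<close> i P unfolding norm_bound_def by fastforce
      then show "norm (P $$ (i, j) * w $ h j) \<le> max c 0 * norm w"
        unfolding norm_mult by (intro mult_mono Finite_Cartesian_Product.norm_nth_le) auto
    qed
    finally show ?thesis by simp
  qed
  have "norm u \<le> (\<Sum>l\<in>UNIV. norm (u $ l))"
    unfolding norm_vec_def by (rule L2_set_le_sum) auto
  also have "\<dots> \<le> (\<Sum>l\<in>(UNIV::'n set). CARD('n) * max c 0 * norm w)"
    by (intro sum_mono entry)
  finally show ?thesis by simp
qed

end

lemma finite_eigenvalues:
  fixes M :: "'a::field^'n^'n"
  shows "finite {z. \<exists>w. w \<noteq> 0 \<and> M *v w = z *s w}"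
proof -
  obtain h :: "nat \<Rightarrow> 'n" where h: "bij_betw h {0..<CARD('n)} UNIV"
    using ex_bij_betw_nat_finite[of "UNIV::'n set"] by auto
  have "{z. \<exists>w. w \<noteq> 0 \<and> M *v w = z *s w} = spectrum (jnf_mat h M)"
    by (auto simp: spectrum_def eigenvalue_jnf_mat[OF h])
  then show ?thesis using card_finite_spectrum(1)[OF jnf_mat_carrier] by simp
qed

lemma eigenvalue_norm_le_mat_spectral_radius:
  fixes A :: "real^'n^'n"
  assumes "w \<noteq> 0" and "complex_mat A *v w = z *s w"
  shows "norm z \<le> mat_spectral_radius A"
  unfolding mat_spectral_radius_eigenvalues using assms finite_eigenvalues
  by (intro Max_ge) auto

lemma bounded_matrix_powers_if_eigenvalues_less_1:
  fixes B :: "complex^'n^'n"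
  assumes eig: "\<And>z w. w \<noteq> 0 \<Longrightarrow> B *v w = z *s w \<Longrightarrow> norm z < 1"
  obtains C where "\<And>k w. norm (((*v) B ^^ k) w) \<le> C * norm w"
proof -
  obtain h :: "nat \<Rightarrow> 'n" where h: "bij_betw h {0..<CARD('n)} UNIV"
    using ex_bij_betw_nat_finite[of "UNIV::'n set"] by auto
  have "spectral_radius (jnf_mat h B) \<in> norm ` spectrum (jnf_mat h B)"
    using spectral_radius_mem_max(1)[OF jnf_mat_carrier] by simp
  then have "spectral_radius (jnf_mat h B) < 1"
    using eig by (auto simp: spectrum_def eigenvalue_jnf_mat[OF h])
  then obtain c where c: "\<And>k. norm_bound (jnf_mat h B ^\<^sub>m k) c"
    using spectral_radius_jnf_norm_bound_less_1_upper_triangular[OF jnf_mat_carrier] by blast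
  have "norm (((*v) B ^^ k) w) \<le> CARD('n) * (CARD('n) * max c 0) * norm w" for k w
    using norm_le_if_norm_bound[OF h pow_carrier_mat[OF jnf_mat_carrier] c jnf_mat_pow_mult_vec[OF h]] .
  then show thesis using that by blast
qed

lemma mat_spectral_radius_power_decay:
  fixes A :: "real^'n^'n"
  assumes "mat_spectral_radius A < t" and "0 < t"
  obtains C where "\<And>k v. norm (((*v) A ^^ k) v) \<le> C * t ^ k * norm v"
proof -
  define B where "B = complex_mat (inverse t *\<^sub>R A)"
  have "norm z < 1" if "w \<noteq> 0" and "B *v w = z *s w" for z w
  proof -
    have "complex_mat A *v w = complex_of_real t *s (B *v w)"
      using \<open>0 < t\<close> by (simp add: B_def complex_mat_scaleR_mult_vec vector_smult_assoc)
    then have "complex_mat A *v w = (complex_of_real t * z) *s w"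
      by (simp add: that(2) vector_smult_assoc)
    then have "norm (complex_of_real t * z) \<le> mat_spectral_radius A"
      by (rule eigenvalue_norm_le_mat_spectral_radius[OF that(1)])
    then have "t * norm z \<le> mat_spectral_radius A"
      using \<open>0 < t\<close> by (simp add: norm_mult)
    then have "t * norm z < t * 1" using assms(1) by simp
    then show ?thesis using \<open>0 < t\<close> by simp
  qed
  then obtain C where C: "\<And>k w. norm (((*v) B ^^ k) w) \<le> C * norm w"
    using bounded_matrix_powers_if_eigenvalues_less_1 by blast
  have "norm (((*v) A ^^ k) v) \<le> C * t ^ k * norm v" for k v
  proof -
    have "norm (((*v) A ^^ k) v) = t ^ k * norm (((*v) (inverse t *\<^sub>R A) ^^ k) v)"
      using \<open>0 < t\<close> by (simp add: funpow_scaleR_mult_vec power_inverse)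
    also have "\<dots> = t ^ k * norm (((*v) B ^^ k) (complex_vec v))"
      by (simp add: B_def funpow_complex_mat_mult_vec)
    also have "\<dots> \<le> C * t ^ k * norm v"
      using C[of k "complex_vec v"] \<open>0 < t\<close> by (simp add: mult_left_mono mult.left_commute)
    finally show ?thesis .
  qed
  then show thesis using that by blast
qed

lemma power_decay_imp_half_contraction:
  fixes L :: "'a::real_normed_vector \<Rightarrow> 'a"
  assumes t: "0 \<le> t" "t < 1" and decay: "\<And>k v. norm ((L ^^ k) v) \<le> C * t ^ k * norm v"
  obtains N where "N > 0" "\<And>v. norm ((L ^^ N) v) \<le> norm v / 2"
proof -
  obtain N where N: "t ^ N < 1 / (2 * max C 1)"
    using real_arch_pow_inv[of "1 / (2 * max C 1)" t] t by auto
  have "N > 0" using N by (cases N) (auto simp: field_simps)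
  moreover have "norm ((L ^^ N) v) \<le> norm v / 2" for v
  proof -
    have "C * t ^ N \<le> max C 1 * t ^ N" using t by (simp add: mult_right_mono)
    also have "\<dots> \<le> 1 / 2" using N by (simp add: field_simps)
    finally have "C * t ^ N * norm v \<le> 1 / 2 * norm v" by (rule mult_right_mono) simp
    then show ?thesis using decay[of N v] by linarith
  qed
  ultimately show thesis using that by blast
qed

lemma adapted_norm_exists:
  fixes L :: "'a::real_normed_vector \<Rightarrow> 'a"
  assumes L: "linear L" and "N > 0"
    and bound: "\<And>k v. norm ((L ^^ k) v) \<le> B * norm v"
    and half: "\<And>v. norm ((L ^^ N) v) \<le> norm v / 2"
  obtains nn M \<theta> where "M \<ge> 1" "0 \<le> \<theta>" "\<theta> < 1"
    "\<And>v. norm v \<le> nn v" "\<And>v. nn v \<le> M * norm v"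
    "\<And>u v. nn (u + v) \<le> nn u + nn v" "\<And>v. nn (L v) \<le> \<theta> * nn v"
proof -
  define nn where "nn v = (\<Sum>k<N. norm ((L ^^ k) v))" for v
  define M where "M = N * max B 1"
  have "M \<ge> 1" unfolding M_def using mult_mono[of 1 "real N" 1 "max B 1"] \<open>N > 0\<close> by simp
  have ge: "norm v \<le> nn v" for v
    using member_le_sum[of 0 "{..<N}" "\<lambda>k. norm ((L ^^ k) v)"] \<open>N > 0\<close> by (simp add: nn_def)
  have "norm ((L ^^ k) v) \<le> max B 1 * norm v" for k v
    using bound[of k v] mult_right_mono[of B "max B 1" "norm v"] by simp
  then have le: "nn v \<le> M * norm v" for v
    using sum_mono[of "{..<N}" "\<lambda>k. norm ((L ^^ k) v)" "\<lambda>k. max B 1 * norm v"]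
    by (simp add: nn_def M_def)
  have additive: "(L ^^ k) (u + v) = (L ^^ k) u + (L ^^ k) v" for k u v
    by (induction k) (simp_all add: linear_add[OF L])
  have subadd: "nn (u + v) \<le> nn u + nn v" for u v
    unfolding nn_def sum.distrib[symmetric] additive by (intro sum_mono norm_triangle_ineq)
  define \<theta> where "\<theta> = 1 - 1 / (2 * M)"
  have "0 \<le> \<theta>" "\<theta> < 1" using \<open>M \<ge> 1\<close> by (auto simp: \<theta>_def field_simps)
  have contr: "nn (L v) \<le> \<theta> * nn v" for v
  proof -
    have "nn (L v) = (\<Sum>k<Suc N. norm ((L ^^ k) v)) - norm v"
      unfolding nn_def by (subst sum.lessThan_Suc_shift) (simp add: funpow_Suc_right del: funpow.simps)
    also have "\<dots> \<le> nn v - norm v / 2" using half[of v] by (simp add: nn_def)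
    also have "\<dots> \<le> nn v - nn v / (2 * M)"
      using le[of v] \<open>M \<ge> 1\<close> by (simp add: field_simps)
    also have "\<dots> = \<theta> * nn v" by (simp add: \<theta>_def algebra_simps)
    finally show ?thesis .
  qed
  from that[OF \<open>M \<ge> 1\<close> \<open>0 \<le> \<theta>\<close> \<open>\<theta> < 1\<close> ge le subadd contr] show thesis .
qed

section \<open>Local contraction near a linearly stable fixed point\<close>

lemma has_derivative_partial_fst:
  assumes "\<And>q. ((\<lambda>q. f (fst q) (snd q)) has_derivative blinfun_apply (g' q)) (at q)"
  shows "((\<lambda>y. f y lam) has_derivative (\<lambda>h. g' (y, lam) (h, 0))) (at y)"
proof -
  have "((\<lambda>y. (y, lam)) has_derivative (\<lambda>h. (h, 0))) (at y)"
    by (intro has_derivative_Pair has_derivative_ident has_derivative_const)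
  from has_derivative_compose[OF this assms] show ?thesis by simp
qed

lemma Dx_mult_vec:
  fixes f :: "real^'l \<Rightarrow> real^'m \<Rightarrow> real^'l"
  assumes "\<And>q. ((\<lambda>q. f (fst q) (snd q)) has_derivative blinfun_apply (g' q)) (at q)"
  shows "Dx f y lam *v h = g' (y, lam) (h, 0)"
proof -
  note d = has_derivative_partial_fst[OF assms, of lam y]
  have "frechet_derivative (\<lambda>y. f y lam) (at y) = (\<lambda>h. g' (y, lam) (h, 0))"
    using frechet_derivative_at[OF d] by simp
  then show ?thesis
    unfolding Dx_def using has_derivative_linear[OF d] by (simp add: matrix_works)
qed

lemma onorm_partial_fst_le:
  fixes F G :: "('a::real_normed_vector \<times> 'b::real_normed_vector) \<Rightarrow>\<^sub>L 'c::real_normed_vector"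
  shows "onorm (\<lambda>h. F (h, 0) - G (h, 0)) \<le> norm (F - G)"
proof (rule onorm_bound)
  fix h
  have "norm (F (h, 0) - G (h, 0)) \<le> norm (F - G) * norm (h, 0::'b)"
    using norm_blinfun[of "F - G" "(h, 0)"] by (simp add: blinfun.diff_left)
  then show "norm (F (h, 0) - G (h, 0)) \<le> norm (F - G) * norm h" by simp
qed simp

lemma C1_map_linearization:
  fixes f :: "real^'l \<Rightarrow> real^'m \<Rightarrow> real^'l"
  assumes C1: "C1_map (\<lambda>q. f (fst q) (snd q))" and "\<eta> > 0"
  obtains \<delta> where "\<delta> > 0"
    "\<And>y lam. norm (y - x0) \<le> \<delta> \<Longrightarrow> norm (lam - l0) \<le> \<delta> \<Longrightarrow>
       norm (f y lam - f x0 lam - Dx f x0 l0 *v (y - x0)) \<le> \<eta> * norm (y - x0)"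
proof -
  obtain g' where deriv: "\<And>q. ((\<lambda>q. f (fst q) (snd q)) has_derivative blinfun_apply (g' q)) (at q)"
    and "continuous_on UNIV g'"
    using C1 unfolding C1_map_def by blast
  then have "isCont g' (x0, l0)" by (simp add: continuous_on_eq_continuous_at)
  then obtain d where "d > 0" and d: "\<And>q. dist q (x0, l0) < d \<Longrightarrow> dist (g' q) (g' (x0, l0)) < \<eta>"
    unfolding continuous_at_eps_delta using \<open>\<eta> > 0\<close> by blast
  have "norm (f y lam - f x0 lam - Dx f x0 l0 *v (y - x0)) \<le> \<eta> * norm (y - x0)"
    if y: "norm (y - x0) \<le> d/3" and lam: "norm (lam - l0) \<le> d/3" for y lam
  proof -
    define S where "S = cball x0 (d/3)"
    define \<phi> where "\<phi> z = f z lam - Dx f x0 l0 *v z" for z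
    define \<phi>' where "\<phi>' z h = g' (z, lam) (h, 0) - Dx f x0 l0 *v h" for z h
    have "(\<phi> has_derivative \<phi>' z) (at z)" for z
      unfolding \<phi>_def[abs_def] \<phi>'_def[abs_def]
      by (intro has_derivative_diff has_derivative_partial_fst[OF deriv]
          bounded_linear_imp_has_derivative matrix_vector_mul_bounded_linear)
    then have "(\<phi> has_derivative \<phi>' z) (at z within S)" for z
      by (rule has_derivative_at_withinI)
    moreover have "onorm (\<phi>' z) \<le> \<eta>" if "z \<in> S" for z
    proof -
      have "dist (z, lam) (x0, l0) \<le> dist z x0 + dist lam l0"
        unfolding dist_Pair_Pair by (rule sqrt_sum_squares_le_sum) auto
      also have "\<dots> < d"
        using that lam \<open>d > 0\<close> by (simp add: S_def dist_norm norm_minus_commute)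
      finally have "norm (g' (z, lam) - g' (x0, l0)) \<le> \<eta>"
        using d by (simp add: dist_norm less_imp_le)
      have "\<phi>' z = (\<lambda>h. g' (z, lam) (h, 0) - g' (x0, l0) (h, 0))"
        by (simp add: \<phi>'_def Dx_mult_vec[OF deriv] fun_eq_iff)
      then have "onorm (\<phi>' z) \<le> norm (g' (z, lam) - g' (x0, l0))"
        by (simp only: onorm_partial_fst_le)
      also have "\<dots> \<le> \<eta>" by fact
      finally show ?thesis .
    qed
    ultimately have "norm (\<phi> y - \<phi> x0) \<le> \<eta> * norm (y - x0)"
      using differentiable_bound[of S \<phi> \<phi>' \<eta> y x0] y \<open>d > 0\<close>
      by (simp add: S_def dist_norm norm_minus_commute)
    then show ?thesis by (simp add: \<phi>_def matrix_vector_mult_diff_distrib algebra_simps)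
  qed
  then show thesis using that[of "d/3"] \<open>d > 0\<close> by simp
qed

lemma C1_map_isCont: "C1_map g \<Longrightarrow> isCont g q"
  unfolding C1_map_def using has_derivative_continuous by blast

lemma C1_map_local_contraction:
  fixes f :: "real^'l \<Rightarrow> real^'m \<Rightarrow> real^'l"
  assumes C1: "C1_map (\<lambda>q. f (fst q) (snd q))"
    and stable: "mat_spectral_radius (Dx f p lam0) < 1"
  obtains M \<theta> \<delta> nn where "M \<ge> 1" "0 \<le> \<theta>" "\<theta> < 1" "\<delta> > 0"
    "\<And>v. norm v \<le> nn v" "\<And>v. nn v \<le> M * norm v"
    "\<And>y lam. norm (y - p) \<le> \<delta> \<Longrightarrow> norm (lam - lam0) \<le> \<delta> \<Longrightarrow>
       nn (f y lam - p) \<le> \<theta> * nn (y - p) + M * norm (f p lam - p)"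
proof -
  define A where "A = Dx f p lam0"
  define t where "t = (max (mat_spectral_radius A) 0 + 1) / 2"
  have t: "mat_spectral_radius A < t" "0 < t" "t < 1" using stable by (auto simp: t_def A_def)
  then obtain C where decay: "\<And>k v. norm (((*v) A ^^ k) v) \<le> C * t ^ k * norm v"
    using mat_spectral_radius_power_decay by blast
  obtain N where "N > 0" and half: "\<And>v. norm (((*v) A ^^ N) v) \<le> norm v / 2"
    using power_decay_imp_half_contraction[of t "(*v) A" C] t decay by auto
  have bound: "norm (((*v) A ^^ k) v) \<le> max C 0 * norm v" for k v
  proof -
    have "C * t ^ k \<le> max C 0 * 1" using t by (intro mult_mono) (auto simp: power_le_one)
    then have "C * t ^ k * norm v \<le> max C 0 * norm v" by (simp add: mult_right_mono)
    then show ?thesis using decay[of k v] by linarith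
  qed
  obtain nn M \<theta> where M: "M \<ge> 1" and \<theta>: "0 \<le> \<theta>" "\<theta> < 1"
    and nn_ge: "\<And>v. norm v \<le> nn v" and nn_le: "\<And>v. nn v \<le> M * norm v"
    and nn_add: "\<And>u v. nn (u + v) \<le> nn u + nn v" and nn_A: "\<And>v. nn (A *v v) \<le> \<theta> * nn v"
    by (rule adapted_norm_exists[OF matrix_vector_mul_linear \<open>N > 0\<close> bound half]) blast
  define \<eta> where "\<eta> = (1 - \<theta>) / (2 * M)"
  have "\<eta> > 0" using M \<theta> by (simp add: \<eta>_def)
  then obtain \<delta> where "\<delta> > 0" and lin: "\<And>y lam. norm (y - p) \<le> \<delta> \<Longrightarrow> norm (lam - lam0) \<le> \<delta> \<Longrightarrow>
      norm (f y lam - f p lam - A *v (y - p)) \<le> \<eta> * norm (y - p)"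
    unfolding A_def by (rule C1_map_linearization[OF C1]) blast
  have step: "nn (f y lam - p) \<le> (\<theta> + M * \<eta>) * nn (y - p) + M * norm (f p lam - p)"
    if "norm (y - p) \<le> \<delta>" "norm (lam - lam0) \<le> \<delta>" for y lam
  proof -
    define r where "r = f y lam - f p lam - A *v (y - p)"
    have "nn r \<le> M * norm r" by (rule nn_le)
    also have "\<dots> \<le> M * (\<eta> * norm (y - p))"
      using lin[OF that] M unfolding r_def by (intro mult_left_mono) auto
    also have "\<dots> \<le> M * (\<eta> * nn (y - p))"
      using nn_ge[of "y - p"] M \<open>\<eta> > 0\<close> by (intro mult_left_mono) auto
    finally have "nn r \<le> M * (\<eta> * nn (y - p))" .
    moreover have "nn (f y lam - p) \<le> nn r + nn (A *v (y - p)) + nn (f p lam - p)"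
    proof -
      have "f y lam - p = r + A *v (y - p) + (f p lam - p)" by (simp add: r_def)
      then have "nn (f y lam - p) \<le> nn (r + A *v (y - p)) + nn (f p lam - p)"
        by (simp only: nn_add)
      then show ?thesis using nn_add[of r "A *v (y - p)"] by linarith
    qed
    moreover have "(\<theta> + M * \<eta>) * nn (y - p) = \<theta> * nn (y - p) + M * (\<eta> * nn (y - p))"
      by (simp add: algebra_simps)
    ultimately show ?thesis using nn_A[of "y - p"] nn_le[of "f p lam - p"] by linarith
  qed
  have "M * \<eta> = (1 - \<theta>) / 2" using M by (simp add: \<eta>_def)
  then have "0 \<le> \<theta> + M * \<eta>" "\<theta> + M * \<eta> < 1" using \<theta> by simp_all
  from that[OF M this \<open>\<delta> > 0\<close> nn_ge nn_le step] show thesis .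
qed

section \<open>Iteration with converging parameters\<close>

lemma nonautonomous_orbit_tracks_limit_orbit:
  fixes F :: "'a::t2_space \<Rightarrow> 'b::t2_space \<Rightarrow> 'a"
  assumes F: "\<And>q. isCont (\<lambda>q. F (fst q) (snd q)) q"
    and y: "\<And>k. y (Suc k) = F (y k) (\<mu> k)" and \<mu>: "\<mu> \<longlonglongrightarrow> lam"
    and \<sigma>: "strict_mono \<sigma>" and lim: "(y \<circ> \<sigma>) \<longlonglongrightarrow> z"
  shows "(\<lambda>m. y (\<sigma> m + i)) \<longlonglongrightarrow> ((\<lambda>z. F z lam) ^^ i) z"
proof (induction i)
  case 0
  show ?case using lim by (simp add: o_def)
next
  case (Suc i)
  have "strict_mono (\<lambda>m. \<sigma> m + i)" using \<sigma> by (simp add: strict_mono_def)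
  then have "(\<lambda>m. \<mu> (\<sigma> m + i)) \<longlonglongrightarrow> lam"
    using LIMSEQ_subseq_LIMSEQ[OF \<mu>] by (simp add: o_def)
  from isCont_tendsto_compose[OF F tendsto_Pair[OF Suc.IH this]]
  show ?case by (simp add: y)
qed

lemma nonautonomous_orbit_frequently_near_attractor:
  fixes F :: "'a::metric_space \<Rightarrow> 'b::t2_space \<Rightarrow> 'a"
  assumes F: "\<And>q. isCont (\<lambda>q. F (fst q) (snd q)) q"
    and y: "\<And>k. y (Suc k) = F (y k) (\<mu> k)" and \<mu>: "\<mu> \<longlonglongrightarrow> lam"
    and K: "compact K" "\<And>k. y k \<in> K"
    and attract: "\<And>z. z \<in> K \<Longrightarrow> (\<lambda>n. ((\<lambda>z. F z lam) ^^ n) z) \<longlonglongrightarrow> p"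
    and "\<epsilon> > 0"
  shows "\<exists>\<^sub>F k in sequentially. dist (y k) p < \<epsilon>"
  unfolding frequently_sequentially
proof
  fix N
  obtain z \<sigma> where "z \<in> K" and \<sigma>: "strict_mono \<sigma>" and lim: "(y \<circ> \<sigma>) \<longlonglongrightarrow> z"
    using compact_imp_seq_compact[OF K(1)] K(2) unfolding seq_compact_def by metis
  then obtain j where j: "dist (((\<lambda>z. F z lam) ^^ j) z) p < \<epsilon>"
    using tendstoD[OF attract \<open>\<epsilon> > 0\<close>] by (meson eventually_sequentially order.refl)
  have "(\<lambda>m. dist (y (\<sigma> m + j)) p) \<longlonglongrightarrow> dist (((\<lambda>z. F z lam) ^^ j) z) p"
    by (intro tendsto_dist tendsto_const nonautonomous_orbit_tracks_limit_orbit[OF F y \<mu> \<sigma> lim])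
  from order_tendstoD(2)[OF this j] obtain m where "m \<ge> N" "dist (y (\<sigma> m + j)) p < \<epsilon>"
    unfolding eventually_sequentially by (meson nle_le)
  moreover have "\<sigma> m + j \<ge> N" using seq_suble[OF \<sigma>, of m] \<open>m \<ge> N\<close> by simp
  ultimately show "\<exists>k\<ge>N. dist (y k) p < \<epsilon>" by blast
qed

lemma perturbed_contraction_tendsto_0:
  fixes e \<beta> :: "nat \<Rightarrow> real"
  assumes \<theta>: "0 \<le> \<theta>" "\<theta> < 1" and "\<delta> > 0" and nonneg: "\<And>k. 0 \<le> e k"
    and step: "\<forall>\<^sub>F k in sequentially. e k \<le> \<delta> \<longrightarrow> e (Suc k) \<le> \<theta> * e k + \<beta> k"
    and \<beta>: "\<beta> \<longlonglongrightarrow> 0"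
    and small: "\<And>\<epsilon>. \<epsilon> > 0 \<Longrightarrow> \<exists>\<^sub>F k in sequentially. e k < \<epsilon>"
  shows "e \<longlonglongrightarrow> 0"
proof (rule tendstoI)
  fix \<epsilon> :: real assume "\<epsilon> > 0"
  define \<epsilon>' where "\<epsilon>' = min (\<epsilon> / 2) \<delta>"
  have \<epsilon>': "0 < \<epsilon>'" "\<epsilon>' \<le> \<delta>" "\<epsilon>' < \<epsilon>" using \<open>\<epsilon> > 0\<close> \<open>\<delta> > 0\<close> by (auto simp: \<epsilon>'_def)
  have "\<forall>\<^sub>F k in sequentially. \<beta> k < (1 - \<theta>) * \<epsilon>'"
    using order_tendstoD(2)[OF \<beta>] \<theta> \<epsilon>' by simp
  with step have "\<forall>\<^sub>F k in sequentially.
      (e k \<le> \<delta> \<longrightarrow> e (Suc k) \<le> \<theta> * e k + \<beta> k) \<and> \<beta> k < (1 - \<theta>) * \<epsilon>'"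
    by (rule eventually_conj)
  then obtain k0 where k0: "\<And>k. k \<ge> k0 \<Longrightarrow>
      (e k \<le> \<delta> \<longrightarrow> e (Suc k) \<le> \<theta> * e k + \<beta> k) \<and> \<beta> k < (1 - \<theta>) * \<epsilon>'"
    unfolding eventually_sequentially by blast
  obtain k1 where "k1 \<ge> k0" "e k1 < \<epsilon>'"
    using small[OF \<open>\<epsilon>' > 0\<close>] unfolding frequently_sequentially by blast
  have trapped: "e (k1 + i) \<le> \<epsilon>'" for i
  proof (induction i)
    case 0
    show ?case using \<open>e k1 < \<epsilon>'\<close> by simp
  next
    case (Suc i)
    have "e (k1 + Suc i) \<le> \<theta> * e (k1 + i) + \<beta> (k1 + i)"
      using k0[of "k1 + i"] \<open>k1 \<ge> k0\<close> Suc.IH \<epsilon>' by simp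
    also have "\<dots> \<le> \<theta> * \<epsilon>' + (1 - \<theta>) * \<epsilon>'"
      using k0[of "k1 + i"] \<open>k1 \<ge> k0\<close> Suc.IH \<theta> by (intro add_mono mult_left_mono) auto
    finally show ?case by (simp add: algebra_simps)
  qed
  show "\<forall>\<^sub>F k in sequentially. dist (e k) 0 < \<epsilon>"
    unfolding eventually_sequentially
  proof (intro exI allI impI)
    fix k assume "k1 \<le> k"
    then show "dist (e k) 0 < \<epsilon>"
      using trapped[of "k - k1"] nonneg[of k] \<epsilon>' by simp
  qed
qed

lemma nonautonomous_orbit_converges_if_frequently_near:
  fixes f :: "real^'l \<Rightarrow> real^'m \<Rightarrow> real^'l"
  assumes C1: "C1_map (\<lambda>q. f (fst q) (snd q))"
    and fixed: "f p lam = p" and stable: "mat_spectral_radius (Dx f p lam) < 1"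
    and y: "\<And>k. y (Suc k) = f (y k) (\<mu> k)" and \<mu>: "\<mu> \<longlonglongrightarrow> lam"
    and near: "\<And>\<epsilon>. \<epsilon> > 0 \<Longrightarrow> \<exists>\<^sub>F k in sequentially. dist (y k) p < \<epsilon>"
  shows "y \<longlonglongrightarrow> p"
proof -
  obtain M \<theta> \<delta> nn where M: "M \<ge> 1" and \<theta>: "0 \<le> \<theta>" "\<theta> < 1" and "\<delta> > 0"
    and nn_ge: "\<And>v. norm v \<le> nn v" and nn_le: "\<And>v. nn v \<le> M * norm v"
    and step: "\<And>y lam'. norm (y - p) \<le> \<delta> \<Longrightarrow> norm (lam' - lam) \<le> \<delta> \<Longrightarrow>
       nn (f y lam' - p) \<le> \<theta> * nn (y - p) + M * norm (f p lam' - p)"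
    by (rule C1_map_local_contraction[OF C1 stable]) blast
  define e where "e k = nn (y k - p)" for k
  define \<beta> where "\<beta> k = M * norm (f p (\<mu> k) - p)" for k
  have "e \<longlonglongrightarrow> 0"
  proof (rule perturbed_contraction_tendsto_0[OF \<theta> \<open>\<delta> > 0\<close>])
    show "0 \<le> e k" for k
      using nn_ge[of "y k - p"] norm_ge_zero[of "y k - p"] unfolding e_def by linarith
    have "\<forall>\<^sub>F k in sequentially. norm (\<mu> k - lam) \<le> \<delta>"
      using tendstoD[OF \<mu> \<open>\<delta> > 0\<close>] by eventually_elim (simp add: dist_norm)
    then show "\<forall>\<^sub>F k in sequentially. e k \<le> \<delta> \<longrightarrow> e (Suc k) \<le> \<theta> * e k + \<beta> k"
    proof eventually_elim
      case (elim k)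
      show ?case
      proof
        assume "e k \<le> \<delta>"
        then have "norm (y k - p) \<le> \<delta>" using nn_ge[of "y k - p"] by (simp add: e_def)
        from step[OF this elim] show "e (Suc k) \<le> \<theta> * e k + \<beta> k"
          by (simp add: e_def \<beta>_def y)
      qed
    qed
    have "(\<lambda>k. f p (\<mu> k)) \<longlonglongrightarrow> f p lam"
      using isCont_tendsto_compose[OF C1_map_isCont[OF C1] tendsto_Pair[OF tendsto_const \<mu>]] by simp
    then show "\<beta> \<longlonglongrightarrow> 0"
      unfolding \<beta>_def fixed by (intro tendsto_mult_right_zero tendsto_norm_zero LIM_zero)
    show "\<exists>\<^sub>F k in sequentially. e k < \<epsilon>" if "\<epsilon> > 0" for \<epsilon>
      using near[of "\<epsilon> / M"]
    proof (rule frequently_elim1)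
      show "\<epsilon> / M > 0" using \<open>\<epsilon> > 0\<close> M by simp
      fix k assume "dist (y k) p < \<epsilon> / M"
      then have "M * norm (y k - p) < \<epsilon>" using M by (simp add: dist_norm field_simps)
      then show "e k < \<epsilon>" using nn_le[of "y k - p"] unfolding e_def by linarith
    qed
  qed
  then have "(\<lambda>k. y k - p) \<longlonglongrightarrow> 0"
    by (rule Lim_null_comparison[rotated]) (intro always_eventually allI, simp add: e_def nn_ge)
  then show ?thesis by (rule LIM_zero_cancel)
qed

lemma nonautonomous_orbit_converges_to_stable_fixed_point:
  fixes f :: "real^'l \<Rightarrow> real^'m \<Rightarrow> real^'l"
  assumes C1: "C1_map (\<lambda>q. f (fst q) (snd q))"
    and fixed: "f p lam = p" and stable: "mat_spectral_radius (Dx f p lam) < 1"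
    and K: "compact K" "K \<subseteq> basin f p lam"
    and y: "\<And>k. y (Suc k) = f (y k) (\<mu> k)" "\<And>k. y k \<in> K" and \<mu>: "\<mu> \<longlonglongrightarrow> lam"
  shows "y \<longlonglongrightarrow> p"
proof (rule nonautonomous_orbit_converges_if_frequently_near[OF C1 fixed stable y(1) \<mu>])
  fix \<epsilon> :: real assume "\<epsilon> > 0"
  have "(\<lambda>n. ((\<lambda>z. f z lam) ^^ n) z) \<longlonglongrightarrow> p" if "z \<in> K" for z
    using K(2) that by (auto simp: basin_def)
  from nonautonomous_orbit_frequently_near_attractor[OF C1_map_isCont[OF C1] y(1) \<mu> K(1) y(2)
      this \<open>\<epsilon> > 0\<close>]
  show "\<exists>\<^sub>F k in sequentially. dist (y k) p < \<epsilon>" .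
qed

section \<open>Pullback orbits of a forward inflowing stable path\<close>

lemma shifted_orbit_Suc:
  assumes "\<And>n. x (n + 1) = f (x n) (\<Lambda> (r * real_of_int n))"
  shows "x (N + int (Suc k)) = f (x (N + int k)) (\<Lambda> (r * real_of_int (N + int k)))"
proof -
  have "N + int (Suc k) = N + int k + 1" by simp
  then show ?thesis by (simp only: assms)
qed

lemma orbit_in_increasing_invariant_sets:
  fixes K :: "real \<Rightarrow> 'a set"
  assumes mono: "\<And>s1 s2. s1 < s2 \<Longrightarrow> K s1 \<subseteq> K s2"
    and invariant: "\<And>s. (\<lambda>x. f x (\<Lambda> s)) ` K s \<subseteq> K s"
    and x: "\<And>n. x (n + 1) = f (x n) (\<Lambda> (r * real_of_int n))" and "r > 0"
    and start: "x N \<in> K (r * real_of_int N)"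
  shows "x (N + int k) \<in> K (r * real_of_int (N + int k))"
proof (induction k)
  case 0
  show ?case using start by simp
next
  case (Suc k)
  have "x (N + int (Suc k)) = f (x (N + int k)) (\<Lambda> (r * real_of_int (N + int k)))"
    using x by (rule shifted_orbit_Suc)
  also have "\<dots> \<in> K (r * real_of_int (N + int k))" using invariant Suc.IH by blast
  also have "\<dots> \<subseteq> K (r * real_of_int (N + int (Suc k)))" using \<open>r > 0\<close> by (intro mono) simp
  finally show ?case .
qed

lemma forward_inflowing_stable_orbit_trapped:
  fixes f :: "real^'l \<Rightarrow> real^'m \<Rightarrow> real^'l"
  assumes "forward_inflowing_stable f \<Lambda> lm lp X Xm Xp"
    and x: "\<And>n. x (n + 1) = f (x n) (\<Lambda> (r * real_of_int n))" and "r > 0"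
    and "(x \<longlongrightarrow> Xm) at_bot"
  obtains Kp N where "compact Kp" "Kp \<subseteq> basin f Xp lp" "\<And>k. x (N + int k) \<in> Kp"
proof -
  obtain K :: "real \<Rightarrow> (real^'l) set" where mono: "\<And>s1 s2. s1 < s2 \<Longrightarrow> K s1 \<subseteq> K s2"
    and invariant: "\<And>s. (\<lambda>x. f x (\<Lambda> s)) ` K s \<subseteq> K s"
    and "Xm \<in> interior (\<Inter>s. K s)" and "compact (closure (\<Union>s. K s))"
    and "closure (\<Union>s. K s) \<subseteq> basin f Xp lp"
    using assms(1) unfolding forward_inflowing_stable_def by blast
  have "\<forall>\<^sub>F n in at_bot. x n \<in> interior (\<Inter>s. K s)"
    using topological_tendstoD[OF \<open>(x \<longlongrightarrow> Xm) at_bot\<close> open_interior] \<open>Xm \<in> interior _\<close> .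
  then obtain N where "x N \<in> interior (\<Inter>s. K s)"
    unfolding eventually_at_bot_linorder by blast
  then have "x N \<in> K (r * real_of_int N)" using interior_subset by fast
  then have "x (N + int k) \<in> K (r * real_of_int (N + int k))" for k
    using mono invariant x \<open>r > 0\<close> by (rule orbit_in_increasing_invariant_sets[rotated 4])
  then have "x (N + int k) \<in> closure (\<Union>s. K s)" for k
    using closure_subset by fast
  from that[OF \<open>compact _\<close> \<open>closure _ \<subseteq> _\<close> this] show thesis .
qed

lemma tendsto_sampled_at_top:
  assumes "(\<Lambda> \<longlongrightarrow> l) at_top" and "r > 0"
  shows "(\<lambda>k. \<Lambda> (r * real_of_int (N + int k))) \<longlonglongrightarrow> l"
proof -
  have "filterlim (\<lambda>k. real_of_int N + real k) at_top sequentially"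
    by (rule filterlim_tendsto_add_at_top[OF tendsto_const filterlim_real_sequentially])
  then have "filterlim (\<lambda>k. r * real_of_int (N + int k)) at_top sequentially"
    using filterlim_tendsto_pos_mult_at_top[OF tendsto_const \<open>r > 0\<close>] by simp
  with assms(1) show ?thesis by (rule filterlim_compose)
qed

lemma tendsto_at_top_int_shift:
  fixes x :: "int \<Rightarrow> 'a::topological_space"
  assumes "(\<lambda>k. x (N + int k)) \<longlonglongrightarrow> l"
  shows "(x \<longlongrightarrow> l) at_top"
proof -
  have "((\<lambda>n. x (N + n)) \<longlongrightarrow> l) at_top"
    using assms by (intro filterlim_int_of_nat_at_topD) simp
  moreover have "filterlim (\<lambda>n. n - N) at_top at_top"
    unfolding filterlim_at_top
  proof
    fix Z :: int
    show "\<forall>\<^sub>F n in at_top. Z \<le> n - N"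
      using eventually_ge_at_top[of "Z + N"] by eventually_elim simp
  qed
  ultimately have "((\<lambda>n. x (N + (n - N))) \<longlongrightarrow> l) at_top" by (rule filterlim_compose)
  then show ?thesis by simp
qed

theorem mainTheorem7:
  fixes f :: "real^'l \<Rightarrow> real^'m \<Rightarrow> real^'l"
    and \<Lambda> :: "real \<Rightarrow> real^'m"
    and lm lp :: "real^'m"
    and X :: "real \<Rightarrow> real^'l"
    and Xm Xp :: "real^'l"
  assumes "C1_map (\<lambda>p :: (real^'l) \<times> (real^'m). f (fst p) (snd p))"
    and "parameter_shift \<Lambda> lm lp"
    and "forward_inflowing_stable f \<Lambda> lm lp X Xm Xp"
  shows "\<forall>r > 0. \<forall>x :: int \<Rightarrow> real^'l.
           (\<forall>n. x (n + 1) = f (x n) (\<Lambda> (r * real_of_int n))) \<and> (x \<longlongrightarrow> Xm) at_bot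
           \<longrightarrow> (x \<longlongrightarrow> Xp) at_top"
proof (intro allI impI)
  fix r :: real and x :: "int \<Rightarrow> real^'l"
  assume "r > 0" and "(\<forall>n. x (n + 1) = f (x n) (\<Lambda> (r * real_of_int n))) \<and> (x \<longlongrightarrow> Xm) at_bot"
  then have x: "\<And>n. x (n + 1) = f (x n) (\<Lambda> (r * real_of_int n))" and "(x \<longlongrightarrow> Xm) at_bot"
    by auto
  obtain Kp N where "compact Kp" "Kp \<subseteq> basin f Xp lp" "\<And>k. x (N + int k) \<in> Kp"
    by (rule forward_inflowing_stable_orbit_trapped[OF assms(3) x \<open>r > 0\<close> \<open>(x \<longlongrightarrow> Xm) at_bot\<close>]) blast
  have "f Xp lp = Xp" and "mat_spectral_radius (Dx f Xp lp) < 1"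
    using assms(3) unfolding forward_inflowing_stable_def stable_path_def is_fixed_point_def by auto
  have "(\<Lambda> \<longlongrightarrow> lp) at_top" using assms(2) unfolding parameter_shift_def by blast
  have "x (N + int (Suc k)) = f (x (N + int k)) (\<Lambda> (r * real_of_int (N + int k)))" for k
    using x by (rule shifted_orbit_Suc)
  moreover note \<open>\<And>k. x (N + int k) \<in> Kp\<close>
  moreover have "(\<lambda>k. \<Lambda> (r * real_of_int (N + int k))) \<longlonglongrightarrow> lp"
    using \<open>(\<Lambda> \<longlongrightarrow> lp) at_top\<close> \<open>r > 0\<close> by (rule tendsto_sampled_at_top)
  ultimately have "(\<lambda>k. x (N + int k)) \<longlonglongrightarrow> Xp"
    by (rule nonautonomous_orbit_converges_to_stable_fixed_point[OF assms(1) \<open>f Xp lp = Xp\<close>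
          \<open>mat_spectral_radius _ < 1\<close> \<open>compact Kp\<close> \<open>Kp \<subseteq> _\<close>])
  then show "(x \<longlongrightarrow> Xp) at_top" by (rule tendsto_at_top_int_shift)
qed

end
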